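(* In the continuous scenario with constant request rate $\lambda$ over $\mathcal X$, for any cache state $\mathcal S$, \[ \bar C(\mathcal S) \ge \lambda k F\left(\frac{|\mathcal X|}{k}\right). \]
   Context: $\mathcal X$ is a bounded (compact) subset of $\mathbb R^p$, a cache holds $k$ objects, $C_a(x,y)=h(\|x-y\|)$ with $h:\mathbb R^+\to\mathbb R^+$ non-decreasing and $\|\cdot\|$ a norm, $C_r>0$ is the retrieval cost, $C(x,y)=\min(C_a(x,y),C_r)$ and $C(x,\mathcal S)=\min(\inf_{y\in\mathcal S}C_a(x,y),C_r)$. Requests have constant spatial density $\lambda$ over $\mathcal X$, and the expected cost of cache state $\mathcal S$ is $\bar C(\mathcal S)=\int_{\mathcal X}\lambda\,C(x,\mathcal S)\,dx$. $|\mathcal A|$ denotes the volume (Lebesgue measure) of $\mathcal A$, $\mathcal B(y,v)$ the ball of volume $v$ centered in $y$, and $F(v)=\int_{\mathcal B(y,v)}C(x,y)\,dx$ (independent of $y$). *)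

theory Defs
  imports "HOL-Analysis.Analysis"
begin

definition is_norm :: "('a::euclidean_space \<Rightarrow> real) \<Rightarrow> bool" where
  "is_norm N \<longleftrightarrow> (\<forall>x. N x \<ge> 0) \<and> (\<forall>x. N x = 0 \<longleftrightarrow> x = 0)
     \<and> (\<forall>c x. N (c *\<^sub>R x) = \<bar>c\<bar> * N x) \<and> (\<forall>x y. N (x + y) \<le> N x + N y)"

definition nball :: "('a::euclidean_space \<Rightarrow> real) \<Rightarrow> 'a \<Rightarrow> real \<Rightarrow> 'a set" where
  "nball N y r = {x. N (x - y) \<le> r}"

definition vball :: "('a::euclidean_space \<Rightarrow> real) \<Rightarrow> 'a \<Rightarrow> real \<Rightarrow> 'a set" where
  "vball N y v = nball N y (SOME r. r \<ge> 0 \<and> measure lebesgue (nball N y r) = v)"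

definition cost :: "(real \<Rightarrow> real) \<Rightarrow> ('a::euclidean_space \<Rightarrow> real) \<Rightarrow> real \<Rightarrow> 'a \<Rightarrow> 'a \<Rightarrow> real" where
  "cost h N Cr x y = min (h (N (x - y))) Cr"

definition cost_set :: "(real \<Rightarrow> real) \<Rightarrow> ('a::euclidean_space \<Rightarrow> real) \<Rightarrow> real \<Rightarrow> 'a \<Rightarrow> 'a set \<Rightarrow> real" where
  "cost_set h N Cr x S = min (INF y\<in>S. h (N (x - y))) Cr"

definition exp_cost :: "(real \<Rightarrow> real) \<Rightarrow> ('a::euclidean_space \<Rightarrow> real) \<Rightarrow> real \<Rightarrow> real \<Rightarrow> 'a set \<Rightarrow> 'a set \<Rightarrow> real" where
  "exp_cost h N Cr lam X S = (LINT x:X|lebesgue. lam * cost_set h N Cr x S)"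

text \<open>F(v) = integral over the ball of volume v centred at y of C(x,y); the paper notes it is
  independent of y, we take y = 0.\<close>
definition Fvol :: "(real \<Rightarrow> real) \<Rightarrow> ('a::euclidean_space \<Rightarrow> real) \<Rightarrow> real \<Rightarrow> real \<Rightarrow> real" where
  "Fvol h N Cr v = (LINT x:vball N 0 v|lebesgue. cost h N Cr x 0)"

end

theory Submission
  imports Defs
begin

(* Let B be the N-ball of volume |X|/k, \<tau> the capped cost on its boundary sphere, and
   G z = min (C(z,0) - \<tau>) 0. As the cost is monotone in the norm, G vanishes off B and equals
   C(z,0) - \<tau> on B, so its integral is F(|X|/k) - \<tau>|X|/k. Pointwise
   C(x,S) \<ge> \<tau> + \<Sum>y\<in>S. G (x - y), since the term of the nearest y is at most C(x,S) - \<tau> and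
   all other terms are nonpositive. As G \<le> 0 and Lebesgue measure is translation invariant,
   integrating G (x - y) over X gives at least the integral of G, so integrating over X yields
   \<tau>|X| + k (F(|X|/k) - \<tau>|X|/k) = k F(|X|/k). *)

lemma is_normD:
  assumes "is_norm N"
  shows is_norm_nonneg: "0 \<le> N x"
    and is_norm_eq_0_iff: "N x = 0 \<longleftrightarrow> x = 0"
    and is_norm_scaleR: "N (c *\<^sub>R x) = \<bar>c\<bar> * N x"
    and is_norm_triangle: "N (x + y) \<le> N x + N y"
  using assms unfolding is_norm_def by blast+

lemma is_norm_zero:
  assumes "is_norm N"
  shows "N 0 = 0"
  using is_norm_eq_0_iff[OF assms] by simp

lemma is_norm_minus:
  assumes "is_norm N"
  shows "N (- x) = N x"
  using is_norm_scaleR[OF assms, of "-1" x] by simp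

lemma is_norm_sum_le:
  assumes "is_norm N" "finite A"
  shows "N (sum f A) \<le> (\<Sum>i\<in>A. N (f i))"
  using assms(2)
proof induction
  case empty
  then show ?case using is_norm_zero[OF assms(1)] by simp
next
  case (insert a A)
  then show ?case using is_norm_triangle[OF assms(1), of "f a" "sum f A"] by simp
qed

lemma is_norm_le_mult_norm:
  assumes "is_norm N"
  obtains C where "C > 0" "\<And>x. N x \<le> C * norm x"
proof
  let ?C = "1 + (\<Sum>b\<in>Basis. N b)"
  show "?C > 0" using is_norm_nonneg[OF assms] by (simp add: add_pos_nonneg sum_nonneg)
  fix x :: 'a
  have "N x = N (\<Sum>b\<in>Basis. (x \<bullet> b) *\<^sub>R b)" by (simp add: euclidean_representation)
  also have "\<dots> \<le> (\<Sum>b\<in>Basis. \<bar>x \<bullet> b\<bar> * N b)"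
    using is_norm_sum_le[OF assms finite_Basis, of "\<lambda>b. (x \<bullet> b) *\<^sub>R b"]
    by (simp add: is_norm_scaleR[OF assms])
  also have "\<dots> \<le> (\<Sum>b\<in>Basis. norm x * N b)"
    by (intro sum_mono mult_right_mono Basis_le_norm is_norm_nonneg[OF assms])
  also have "\<dots> \<le> ?C * norm x"
    by (simp add: sum_distrib_left[symmetric] distrib_right)
  finally show "N x \<le> ?C * norm x" .
qed

lemma continuous_on_is_norm:
  assumes "is_norm N"
  shows "continuous_on A N"
proof -
  obtain C where C: "C > 0" "\<And>x. N x \<le> C * norm x" using is_norm_le_mult_norm[OF assms] by blast
  have "C-lipschitz_on A N"
  proof (rule lipschitz_onI)
    fix x y
    have "N x \<le> N y + N (x - y)" "N y \<le> N x + N (x - y)"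
      using is_norm_triangle[OF assms, of y "x - y"] is_norm_triangle[OF assms, of x "y - x"]
        is_norm_minus[OF assms, of "x - y"] by simp_all
    then show "dist (N x) (N y) \<le> C * dist x y"
      using C(2)[of "x - y"] by (simp add: dist_real_def dist_norm abs_le_iff)
  qed (use C in simp)
  then show ?thesis by (rule lipschitz_on_continuous_on)
qed

lemma mult_norm_le_is_norm:
  assumes "is_norm N"
  obtains m where "m > 0" "\<And>x. m * norm x \<le> N x"
proof -
  obtain b :: 'a where "b \<in> Basis" using nonempty_Basis by blast
  then have "sphere (0::'a) 1 \<noteq> {}" by (auto intro!: exI[of _ b])
  then obtain x0 where x0: "x0 \<in> sphere 0 1" "\<And>y. y \<in> sphere 0 1 \<Longrightarrow> N x0 \<le> N y"
    using continuous_attains_inf[OF compact_sphere _ continuous_on_is_norm[OF assms]] by blast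
  have "N x0 * norm x \<le> N x" for x
  proof (cases "x = 0")
    case False
    have "N x0 \<le> N (x /\<^sub>R norm x)" using x0(2) False by simp
    then show ?thesis using False by (simp add: is_norm_scaleR[OF assms] field_simps)
  qed (simp add: is_norm_nonneg[OF assms])
  moreover have "N x0 > 0"
    using x0(1) is_norm_nonneg[OF assms, of x0] is_norm_eq_0_iff[OF assms, of x0] by auto
  ultimately show ?thesis using that by blast
qed

lemma nball_0: "nball N 0 r = {x. N x \<le> r}"
  by (simp add: nball_def)

lemma compact_nball:
  assumes "is_norm N"
  shows "compact (nball N (0::'a::euclidean_space) r)"
proof -
  obtain m where m: "m > 0" "\<And>x::'a. m * norm x \<le> N x" using mult_norm_le_is_norm[OF assms] by blast
  have "closed {x::'a. N x \<le> r}"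
    by (rule closed_Collect_le[OF continuous_on_is_norm[OF assms] continuous_on_const])
  moreover have "{x::'a. N x \<le> r} \<subseteq> cball 0 (r / m)"
  proof
    fix x :: 'a
    assume "x \<in> {x. N x \<le> r}"
    then have "m * norm x \<le> r" using m(2)[of x] by simp
    then show "x \<in> cball 0 (r / m)" using m(1) by (simp add: field_simps)
  qed
  ultimately show ?thesis
    unfolding nball_0 compact_eq_bounded_closed using bounded_cball bounded_subset by blast
qed

lemma nball_eq_scaleR_image:
  assumes "is_norm N" "r \<ge> 0"
  shows "nball N (0::'a::euclidean_space) r = (\<lambda>x. r *\<^sub>R x + 0) ` nball N 0 1"
proof (cases "r = 0")
  case True
  have "N x \<le> 0 \<longleftrightarrow> x = 0" for x :: 'a
    using is_norm_nonneg[OF assms(1), of x] is_norm_eq_0_iff[OF assms(1), of x] by auto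
  moreover have "(0::'a) \<in> nball N 0 1" by (simp add: nball_0 is_norm_zero[OF assms(1)])
  ultimately show ?thesis using True by (auto simp: nball_0)
next
  case False
  then have "r > 0" using assms(2) by simp
  have "x \<in> nball N 0 r \<longleftrightarrow> x /\<^sub>R r \<in> nball N 0 1" for x :: 'a
    using \<open>r > 0\<close> by (simp add: nball_0 is_norm_scaleR[OF assms(1)] field_simps)
  then show ?thesis using \<open>r > 0\<close>
    by (auto simp: image_iff intro!: bexI[of _ "_ /\<^sub>R r"])
qed

lemma measure_nball_unit_pos:
  assumes "is_norm N"
  shows "measure lebesgue (nball N (0::'a::euclidean_space) 1) > 0"
proof -
  obtain C where C: "C > 0" "\<And>x::'a. N x \<le> C * norm x" using is_norm_le_mult_norm[OF assms] by blast
  have "ball (0::'a) (1 / C) \<subseteq> nball N 0 1"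
  proof
    fix x :: 'a
    assume "x \<in> ball 0 (1 / C)"
    then have "C * norm x \<le> 1" using C(1) by (simp add: field_simps)
    then show "x \<in> nball N 0 1" using C(2)[of x] by (simp add: nball_0)
  qed
  then have "measure lebesgue (ball (0::'a) (1 / C)) \<le> measure lebesgue (nball N (0::'a) 1)"
    by (intro measure_mono_fmeasurable) (auto intro: lmeasurable_compact compact_nball[OF assms])
  moreover have "0 < measure lebesgue (ball (0::'a) (1 / C))" using C by simp
  ultimately show ?thesis by linarith
qed

lemma ex_nball_measure_eq:
  assumes "is_norm N" "v \<ge> 0"
  shows "\<exists>r\<ge>0. measure lebesgue (nball N (0::'a::euclidean_space) r) = v"
proof -
  let ?c = "measure lebesgue (nball N (0::'a) 1)"
  have c: "?c > 0" by (rule measure_nball_unit_pos[OF assms(1)])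
  define r where "r = root DIM('a) (v / ?c)"
  have r: "r \<ge> 0" "r ^ DIM('a) = v / ?c"
    unfolding r_def using assms(2) c by (simp_all add: real_root_pow_pos2)
  have "measure lebesgue (nball N (0::'a) r) = r ^ DIM('a) * ?c"
    unfolding nball_eq_scaleR_image[OF assms(1) r(1)] measure_lebesgue_affine using r(1) by simp
  with r c show ?thesis by auto
qed

lemma sum_min_diff_le_Min:
  fixes f :: "'b \<Rightarrow> real"
  assumes "finite S" "S \<noteq> {}"
  shows "\<tau> + (\<Sum>y\<in>S. min (f y - \<tau>) 0) \<le> Min (f ` S)"
proof -
  have "Min (f ` S) \<in> f ` S" using assms by simp
  then obtain y0 where y0: "y0 \<in> S" "Min (f ` S) = f y0" by auto
  have "(\<Sum>y\<in>S. min (f y - \<tau>) 0) = min (f y0 - \<tau>) 0 + (\<Sum>y\<in>S - {y0}. min (f y - \<tau>) 0)"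
    using assms(1) y0(1) by (rule sum.remove)
  also have "\<dots> \<le> min (f y0 - \<tau>) 0"
    using sum_nonpos[of "S - {y0}" "\<lambda>y. min (f y - \<tau>) 0"] by force
  finally show ?thesis using y0(2) by linarith
qed

lemma integrable_lborel_translate:
  fixes f :: "'a::euclidean_space \<Rightarrow> 'b::{banach, second_countable_topology}"
  assumes "integrable lborel f"
  shows "integrable lborel (\<lambda>x. f (x - y))"
proof -
  have "integrable (distr lborel borel ((+) (- y))) f" using assms by (simp add: lborel_distr_plus)
  then show ?thesis
    using borel_measurable_integrable[OF assms] by (subst (asm) integrable_distr_eq) auto
qed

lemma integral_lborel_translate:
  fixes f :: "'a::euclidean_space \<Rightarrow> 'b::{banach, second_countable_topology}"
  assumes "f \<in> borel_measurable borel"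
  shows "integral\<^sup>L lborel (\<lambda>x. f (x - y)) = integral\<^sup>L lborel f"
proof -
  have "integral\<^sup>L lborel f = integral\<^sup>L (distr lborel borel ((+) (- y))) f"
    by (simp add: lborel_distr_plus)
  also have "\<dots> = integral\<^sup>L lborel (\<lambda>x. f (- y + x))"
    using assms by (intro integral_distr) auto
  finally show ?thesis by simp
qed

lemma set_integrable_bounded:
  fixes f :: "'a \<Rightarrow> 'b::{banach, second_countable_topology}"
  assumes "A \<in> sets M" "f \<in> borel_measurable M" "emeasure M A < \<infinity>"
    and "\<And>x. x \<in> A \<Longrightarrow> norm (f x) \<le> C"
  shows "set_integrable M A f"
  unfolding set_integrable_def using assms by (intro integrableI_bounded_set_indicator) auto

lemma integral_le_set_integral_of_nonpos:
  fixes g :: "'a \<Rightarrow> real"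
  assumes "integrable M g" "set_integrable M A g" "\<And>x. g x \<le> 0"
  shows "integral\<^sup>L M g \<le> (LINT x:A|M. g x)"
  using assms unfolding set_lebesgue_integral_def set_integrable_def
  by (intro integral_mono) (auto simp: indicator_def)

lemma integral_min_diff_0_eq:
  fixes \<phi> :: "'a \<Rightarrow> real"
  assumes "\<phi> \<in> borel_measurable M" "B \<in> sets M" "emeasure M B < \<infinity>" "\<And>z. \<bar>\<phi> z\<bar> \<le> C"
    and below: "\<And>z. z \<in> B \<Longrightarrow> \<phi> z \<le> \<tau>" and above: "\<And>z. z \<notin> B \<Longrightarrow> \<tau> \<le> \<phi> z"
  shows "integrable M (\<lambda>z. min (\<phi> z - \<tau>) 0)"
    and "integral\<^sup>L M (\<lambda>z. min (\<phi> z - \<tau>) 0) = (LINT z:B|M. \<phi> z) - \<tau> * measure M B"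
proof -
  have eq: "(\<lambda>z. min (\<phi> z - \<tau>) 0) = (\<lambda>z. indicator B z *\<^sub>R (\<phi> z - \<tau>))"
    using below above by (auto simp: indicator_def fun_eq_iff)
  have integrable: "set_integrable M B \<phi>" "set_integrable M B (\<lambda>_. \<tau>)"
    using assms(1-4) by (auto intro!: set_integrable_bounded)
  show "integrable M (\<lambda>z. min (\<phi> z - \<tau>) 0)"
    using set_integral_diff(1)[OF integrable] by (simp add: eq set_integrable_def)
  have "integral\<^sup>L M (\<lambda>z. min (\<phi> z - \<tau>) 0) = (LINT z:B|M. \<phi> z - \<tau>)"
    by (simp add: eq set_lebesgue_integral_def)
  also have "\<dots> = (LINT z:B|M. \<phi> z) - \<tau> * measure M B"
    using integrable assms(2,3) by (simp add: set_integral_diff set_integral_const)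
  finally show "integral\<^sup>L M (\<lambda>z. min (\<phi> z - \<tau>) 0) = (LINT z:B|M. \<phi> z) - \<tau> * measure M B" .
qed

lemma set_integral_const_add_sum:
  fixes f :: "'i \<Rightarrow> 'a \<Rightarrow> real"
  assumes "A \<in> sets M" "emeasure M A < \<infinity>" "\<And>i. i \<in> I \<Longrightarrow> set_integrable M A (f i)"
  shows "set_integrable M A (\<lambda>x. c + (\<Sum>i\<in>I. f i x))"
    and "(LINT x:A|M. c + (\<Sum>i\<in>I. f i x)) = c * measure M A + (\<Sum>i\<in>I. LINT x:A|M. f i x)"
  using assms unfolding set_integrable_def set_lebesgue_integral_def real_scaleR_def
  by (simp_all add: distrib_left sum_distrib_left Bochner_Integration.integral_add
      Bochner_Integration.integral_sum Bochner_Integration.integrable_sum)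

lemma card_mult_set_integral_le_set_integral_Min_translates:
  fixes \<phi> :: "'a::euclidean_space \<Rightarrow> real"
  assumes [measurable]: "\<phi> \<in> borel_measurable borel" "B \<in> sets borel" "X \<in> sets borel"
    and bounded: "\<And>z. \<bar>\<phi> z\<bar> \<le> M"
    and finite_measure: "emeasure lborel B < \<infinity>" "emeasure lborel X < \<infinity>"
    and below: "\<And>z. z \<in> B \<Longrightarrow> \<phi> z \<le> \<tau>" and above: "\<And>z. z \<notin> B \<Longrightarrow> \<tau> \<le> \<phi> z"
    and S: "finite S" "S \<noteq> {}"
    and volume: "measure lborel X = card S * measure lborel B"
  shows "card S * (LINT z:B|lborel. \<phi> z) \<le> (LINT x:X|lborel. Min ((\<lambda>y. \<phi> (x - y)) ` S))"
proof -
  define G where "G z = min (\<phi> z - \<tau>) 0" for z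
  have integral_G: "integrable lborel G"
    "integral\<^sup>L lborel G = (LINT z:B|lborel. \<phi> z) - \<tau> * measure lborel B"
    unfolding G_def[abs_def]
    using integral_min_diff_0_eq[of \<phi> lborel B M \<tau>] finite_measure(1) bounded below above
    by simp_all
  have [measurable]: "G \<in> borel_measurable borel"
    unfolding G_def by measurable
  have integrable_X_G: "set_integrable lborel X (\<lambda>x. G (x - y))" for y
  proof (rule set_integrable_bounded)
    show "norm (G (x - y)) \<le> M + \<bar>\<tau>\<bar>" for x
      using bounded[of "x - y"] by (auto simp: G_def)
  qed (use finite_measure(2) in auto)
  note integral_X_sum = set_integral_const_add_sum[where f = "\<lambda>y x. G (x - y)" and c = \<tau> and I = S,
      OF _ finite_measure(2) integrable_X_G]
  have integrable_X_Min: "set_integrable lborel X (\<lambda>x. Min ((\<lambda>y. \<phi> (x - y)) ` S))"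
  proof (rule set_integrable_bounded)
    show "norm (Min ((\<lambda>y. \<phi> (x - y)) ` S)) \<le> M" for x
      using Min_in[of "(\<lambda>y. \<phi> (x - y)) ` S"] S bounded by (auto simp del: Min_in)
  qed (use finite_measure(2) S in auto)
  have pointwise: "\<tau> + (\<Sum>y\<in>S. G (x - y)) \<le> Min ((\<lambda>y. \<phi> (x - y)) ` S)" for x
    unfolding G_def using sum_min_diff_le_Min[OF S] by (simp add: image_image)
  have "card S * (LINT z:B|lborel. \<phi> z)
      = \<tau> * measure lborel X + (\<Sum>y\<in>S. integral\<^sup>L lborel (\<lambda>x. G (x - y)))"
    by (simp add: integral_lborel_translate integral_G(2) volume algebra_simps)
  also have "\<dots> \<le> \<tau> * measure lborel X + (\<Sum>y\<in>S. LINT x:X|lborel. G (x - y))"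
    by (intro add_left_mono sum_mono integral_le_set_integral_of_nonpos integrable_X_G
        integrable_lborel_translate integral_G(1)) (simp add: G_def)
  also have "\<dots> = (LINT x:X|lborel. \<tau> + (\<Sum>y\<in>S. G (x - y)))"
    using integral_X_sum(2) by simp
  also have "\<dots> \<le> (LINT x:X|lborel. Min ((\<lambda>y. \<phi> (x - y)) ` S))"
    using integral_X_sum(1) integrable_X_Min pointwise by (intro set_integral_mono) simp_all
  finally show ?thesis .
qed

lemma set_integral_lebesgue_eq_lborel:
  fixes f :: "'a::euclidean_space \<Rightarrow> 'b::{banach, second_countable_topology}"
  assumes "A \<in> sets borel" "f \<in> borel_measurable borel"
  shows "(LINT x:A|lebesgue. f x) = (LINT x:A|lborel. f x)"
  unfolding set_lebesgue_integral_def by (rule integral_completion) (use assms in measurable)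

lemma cost_set_eq_Min:
  assumes "finite S" "S \<noteq> {}"
  shows "cost_set h N Cr x S = Min ((\<lambda>y. cost h N Cr (x - y) 0) ` S)"
proof -
  have "mono (\<lambda>t::real. min t Cr)" by (intro monoI) simp
  from mono_Min_commute[OF this, of "(\<lambda>y. h (N (x - y))) ` S"] show ?thesis
    using assms by (simp add: cost_set_def cost_def cInf_eq_Min image_image)
qed

lemma borel_measurable_cost:
  assumes "is_norm N" "mono_on {0..} h"
  shows "(\<lambda>z. cost h N Cr z 0) \<in> borel_measurable borel"
proof -
  have "(\<lambda>t. h (max t 0)) \<in> borel_measurable borel"
    by (rule borel_measurable_mono) (auto intro!: monoI mono_onD[OF assms(2)])
  moreover have "N \<in> borel_measurable borel"
    by (rule borel_measurable_continuous_onI[OF continuous_on_is_norm[OF assms(1)]])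
  ultimately have "(\<lambda>z. h (max (N z) 0)) \<in> borel_measurable borel"
    by measurable
  then show ?thesis
    using is_norm_nonneg[OF assms(1)] by (simp add: cost_def max_absorb1)
qed

lemma cost_le_if_norm_le:
  assumes "is_norm N" "mono_on {0..} h" "N z \<le> r"
  shows "cost h N Cr z 0 \<le> min (h r) Cr"
proof -
  have "h (N z) \<le> h r"
    using assms(3) is_norm_nonneg[OF assms(1), of z] by (intro mono_onD[OF assms(2)]) auto
  then show ?thesis by (simp add: cost_def min.coboundedI1)
qed

lemma cost_ge_if_norm_ge:
  assumes "mono_on {0..} h" "0 \<le> r" "r \<le> N z"
  shows "min (h r) Cr \<le> cost h N Cr z 0"
proof -
  have "h r \<le> h (N z)" using assms(2,3) by (intro mono_onD[OF assms(1)]) auto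
  then show ?thesis by (simp add: cost_def min.coboundedI1)
qed

lemma vball_eq_nballE:
  assumes "is_norm N" "v \<ge> 0"
  obtains r where "r \<ge> 0" "measure lebesgue (nball N (0::'a::euclidean_space) r) = v"
    "vball N 0 v = nball N 0 r"
  using someI_ex[OF ex_nball_measure_eq[OF assms]] that unfolding vball_def by blast

lemma card_mult_Fvol_le_set_integral_cost_set:
  fixes X S :: "'a::euclidean_space set"
  assumes "compact X" "finite S" "S \<noteq> {}"
    and "is_norm N" "\<forall>t\<ge>0. h t \<ge> 0" "mono_on {0..} h" "Cr \<ge> 0"
  shows "card S * Fvol h N Cr (measure lebesgue X / card S) \<le> (LINT x:X|lebesgue. cost_set h N Cr x S)"
proof -
  let ?v = "measure lebesgue X / card S"
  obtain r where r: "r \<ge> 0" "measure lebesgue (nball N 0 r) = ?v" and B: "vball N 0 ?v = nball N 0 r"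
    using vball_eq_nballE[OF assms(4), of ?v] by auto
  let ?B = "nball N 0 r"
  have [measurable]: "?B \<in> sets borel" "X \<in> sets borel"
    using compact_nball[OF assms(4)] assms(1) by (auto intro: borel_compact)
  have [measurable]: "(\<lambda>z. cost h N Cr z 0) \<in> borel_measurable borel"
    by (rule borel_measurable_cost[OF assms(4,6)])
  have "card S * Fvol h N Cr ?v = card S * (LINT z:?B|lborel. cost h N Cr z 0)"
    unfolding Fvol_def B by (simp add: set_integral_lebesgue_eq_lborel)
  also have "\<dots> \<le> (LINT x:X|lborel. Min ((\<lambda>y. cost h N Cr (x - y) 0) ` S))"
  proof (rule card_mult_set_integral_le_set_integral_Min_translates[where \<tau> = "min (h r) Cr"])
    show "\<bar>cost h N Cr z 0\<bar> \<le> Cr" for z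
      using assms(5,7) is_norm_nonneg[OF assms(4), of z] by (auto simp: cost_def)
    show "emeasure lborel ?B < \<infinity>"
      by (rule emeasure_compact_finite[OF compact_nball[OF assms(4)]])
    show "emeasure lborel X < \<infinity>"
      by (rule emeasure_compact_finite[OF assms(1)])
    show "cost h N Cr z 0 \<le> min (h r) Cr" if "z \<in> ?B" for z
      using that by (intro cost_le_if_norm_le[OF assms(4,6)]) (simp add: nball_0)
    show "min (h r) Cr \<le> cost h N Cr z 0" if "z \<notin> ?B" for z
      using that by (intro cost_ge_if_norm_ge[OF assms(6) r(1)]) (simp add: nball_0)
    show "measure lborel X = card S * measure lborel ?B"
      using r(2) assms(2,3) by simp
  qed (use assms(2,3) in auto)
  also have "\<dots> = (LINT x:X|lebesgue. cost_set h N Cr x S)"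
    using assms(2,3) by (simp add: cost_set_eq_Min set_integral_lebesgue_eq_lborel)
  finally show ?thesis .
qed

theorem theorem8:
  fixes X S :: "'a::euclidean_space set" and h :: "real \<Rightarrow> real" and N :: "'a \<Rightarrow> real"
    and Cr lam :: real and k :: nat
  assumes "compact X"
    and "is_norm N"
    and "\<forall>t\<ge>0. h t \<ge> 0" and "mono_on {0..} h"
    and "Cr > 0" and "lam > 0"
    and "k \<ge> 1" and "finite S" and "card S = k" and "S \<subseteq> X"
  shows "exp_cost h N Cr lam X S \<ge> lam * real k * Fvol h N Cr (measure lebesgue X / real k)"
proof -
  have "S \<noteq> {}" using assms(7,9) by auto
  then have "real k * Fvol h N Cr (measure lebesgue X / real k) \<le> (LINT x:X|lebesgue. cost_set h N Cr x S)"
    using card_mult_Fvol_le_set_integral_cost_set[of X S N h Cr] assms by simp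
  moreover have "exp_cost h N Cr lam X S = lam * (LINT x:X|lebesgue. cost_set h N Cr x S)"
    by (simp add: exp_cost_def)
  ultimately show ?thesis
    using assms(6) by (simp add: mult.assoc mult_left_mono)
qed

end
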